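(* Let $n\in\mathbb{N}$, let $\alpha_1,\dots,\alpha_n\ge0$, and let $U,V_1,\dots,V_n$ be independent nonnegative random variables with densities $f_U,f_{V_1},\dots,f_{V_n}$. Set $Z_i=\alpha_iU+V_i$ and let $X_1,\dots,X_n$ be random variables which, conditionally on $(U,V_1,\dots,V_n)$, are independent with $X_i$ Poisson distributed with mean $Z_i$. Then for all $x_1,\dots,x_n\in\mathbb{N}_0$, $$P(X_1=x_1,\dots,X_n=x_n)=\frac{1}{x_1!\cdots x_n!}\sum_{j_1=0}^{x_1}\cdots\sum_{j_n=0}^{x_n}\binom{x_1}{j_1}\cdots\binom{x_n}{j_n}\alpha_1^{j_1}\cdots\alpha_n^{j_n}\,\mathbb{E}\big(U^{j_1+\dots+j_n}e^{-(\alpha_1+\dots+\alpha_n)U}\big)\prod_{k=1}^n\mathbb{E}\big(V_k^{x_k-j_k}e^{-V_k}\big).$$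
   Context: This is the Poisson mixture model of random-additive-effect type. Conventions: $0^0=1$. *)

theory Defs
  imports "HOL-Probability.Probability"
begin

definition poisson_prob :: "real \<Rightarrow> nat \<Rightarrow> real" where
  "poisson_prob z k = exp (- z) * z ^ k / fact k"

end

theory Submission
  imports Defs
begin

text \<open>Taking no restriction on \<open>(U, V)\<close> in the conditional law, the probability is the
  expectation of a product of Poisson weights. The binomial theorem expands that product into a
  finite sum of terms \<open>U ^ m * exp (- A * U) * (\<Prod>k. V k ^ p k * exp (- V k))\<close>; each of them is a
  product of bounded functions of the independent variables \<open>U, V 0, \<dots>, V (n - 1)\<close>, so its
  expectation factorises.\<close>

lemma power_div_fact_le_exp:
  fixes v :: real
  assumes "0 \<le> v"
  shows "v ^ m / fact m \<le> exp v"
proof -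
  have exp_series: "(\<lambda>n. v ^ n / fact n) sums exp v"
    using exp_converges[of v] by (simp add: divide_inverse mult.commute scaleR_conv_of_real)
  have "(\<Sum>n\<in>{m}. v ^ n / fact n) \<le> (\<Sum>n. v ^ n / fact n)"
    by (rule sum_le_suminf) (use exp_series assms in \<open>auto simp: sums_iff\<close>)
  with exp_series show ?thesis by (simp add: sums_iff)
qed

lemma power_mult_exp_neg_le:
  fixes u a :: real
  assumes "0 \<le> u" "0 \<le> a" "0 < a \<or> m = 0"
  shows "u ^ m * exp (- a * u) \<le> fact m / a ^ m"
  using assms(3)
proof
  assume "0 < a"
  have "(a * u) ^ m / fact m \<le> exp (a * u)"
    by (rule power_div_fact_le_exp) (use assms \<open>0 < a\<close> in simp)
  with \<open>0 < a\<close> show ?thesis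
    by (simp add: exp_minus field_simps power_mult_distrib)
next
  assume "m = 0"
  with assms show ?thesis by simp
qed

lemma (in finite_measure) integrable_power_mult_exp_neg:
  fixes Y :: "'a \<Rightarrow> real"
  assumes [measurable]: "Y \<in> borel_measurable M"
    and "AE \<omega> in M. 0 \<le> Y \<omega>" "0 \<le> a" "0 < a \<or> m = 0"
  shows "integrable M (\<lambda>\<omega>. Y \<omega> ^ m * exp (- a * Y \<omega>))"
proof (rule integrable_const_bound[where B = "fact m / a ^ m"])
  show "AE \<omega> in M. norm (Y \<omega> ^ m * exp (- a * Y \<omega>)) \<le> fact m / a ^ m"
    using assms(2) by eventually_elim (use assms(3,4) power_mult_exp_neg_le in auto)
qed measurable

lemma prod_poisson_prob_binomial_expansion:
  fixes \<alpha> v :: "nat \<Rightarrow> real" and u :: real and x :: "nat \<Rightarrow> nat"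
  shows "(\<Prod>i<n. poisson_prob (\<alpha> i * u + v i) (x i))
     = (1 / (\<Prod>i<n. fact (x i))) *
         (\<Sum>j \<in> Pi\<^sub>E {..<n} (\<lambda>i. {0..x i}).
            (\<Prod>i<n. real (x i choose j i) * \<alpha> i ^ j i) *
            (u ^ (\<Sum>i<n. j i) * exp (- (\<Sum>i<n. \<alpha> i) * u)) *
            (\<Prod>k<n. v k ^ (x k - j k) * exp (- v k)))"
proof -
  have binomial: "(\<alpha> i * u + v i) ^ x i
      = (\<Sum>j\<in>{0..x i}. real (x i choose j) * (\<alpha> i * u) ^ j * v i ^ (x i - j))" for i
    by (simp add: binomial_ring atLeast0AtMost)
  have exp_sum_\<alpha>: "exp (- (\<Sum>i<n. \<alpha> i) * u) = (\<Prod>i<n. exp (- (\<alpha> i * u)))"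
    by (simp add: exp_sum[symmetric] sum_distrib_right sum_negf)
  have "(\<Prod>i<n. poisson_prob (\<alpha> i * u + v i) (x i))
      = (1 / (\<Prod>i<n. fact (x i))) *
        ((\<Prod>i<n. exp (- (\<alpha> i * u)) * exp (- v i)) * (\<Prod>i<n. (\<alpha> i * u + v i) ^ x i))"
    unfolding poisson_prob_def
    by (simp add: prod.distrib prod_dividef exp_add[symmetric] field_simps)
  also have "(\<Prod>i<n. (\<alpha> i * u + v i) ^ x i)
      = (\<Sum>j \<in> Pi\<^sub>E {..<n} (\<lambda>i. {0..x i}).
           \<Prod>i<n. real (x i choose j i) * (\<alpha> i * u) ^ j i * v i ^ (x i - j i))"
    unfolding binomial by (rule prod_sum_PiE) auto
  finally show ?thesis
    unfolding sum_distrib_left exp_sum_\<alpha> power_sum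
    by (simp add: prod.distrib power_mult_distrib mult_ac)
qed

lemma (in prob_space) integral_power_mult_exp_neg_indep:
  fixes U :: "'a \<Rightarrow> real" and V :: "nat \<Rightarrow> 'a \<Rightarrow> real"
  assumes indep: "indep_vars (\<lambda>_. borel)
      (\<lambda>i. case i of None \<Rightarrow> U | Some k \<Rightarrow> V k) (insert None (Some ` {..<n}))"
    and U_nonneg: "AE \<omega> in M. 0 \<le> U \<omega>"
    and V_nonneg: "\<And>k. k < n \<Longrightarrow> AE \<omega> in M. 0 \<le> V k \<omega>"
    and "0 \<le> a" "0 < a \<or> m = 0"
  shows "integrable M (\<lambda>\<omega>. U \<omega> ^ m * exp (- a * U \<omega>) * (\<Prod>k<n. V k \<omega> ^ p k * exp (- V k \<omega>)))"
    and "(\<integral>\<omega>. U \<omega> ^ m * exp (- a * U \<omega>) * (\<Prod>k<n. V k \<omega> ^ p k * exp (- V k \<omega>)) \<partial>M)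
       = (\<integral>\<omega>. U \<omega> ^ m * exp (- a * U \<omega>) \<partial>M) * (\<Prod>k<n. \<integral>\<omega>. V k \<omega> ^ p k * exp (- V k \<omega>) \<partial>M)"
proof -
  let ?I = "insert None (Some ` {..<n})"
  define g where "g i = (case i of None \<Rightarrow> (\<lambda>u. u ^ m * exp (- a * u))
                                 | Some k \<Rightarrow> (\<lambda>v. v ^ p k * exp (- v)))" for i :: "nat option"
  define Y where "Y = (\<lambda>i \<omega>. g i ((case i of None \<Rightarrow> U | Some k \<Rightarrow> V k) \<omega>))"
  have U_meas: "U \<in> borel_measurable M" and V_meas: "\<And>k. k < n \<Longrightarrow> V k \<in> borel_measurable M"
    using indep unfolding indep_vars_def by force+
  have Y_indep: "indep_vars (\<lambda>_. borel) Y ?I"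
    unfolding Y_def
    by (rule indep_vars_compose2[OF indep, where Y = g]) (auto simp: g_def split: option.split)
  have Y_integrable: "integrable M (Y i)" if "i \<in> ?I" for i
  proof (cases i)
    case None
    then show ?thesis
      using integrable_power_mult_exp_neg[OF U_meas U_nonneg assms(4,5)]
      by (simp add: Y_def g_def)
  next
    case (Some k)
    with that have "k < n" by auto
    then show ?thesis
      using Some integrable_power_mult_exp_neg[OF V_meas V_nonneg, of k 1 "p k"]
      by (simp add: Y_def g_def)
  qed
  have prod_I: "(\<Prod>i\<in>?I. f i) = f None * (\<Prod>k<n. f (Some k))" for f :: "nat option \<Rightarrow> real"
    by (simp add: prod.reindex)
  show "integrable M (\<lambda>\<omega>. U \<omega> ^ m * exp (- a * U \<omega>) * (\<Prod>k<n. V k \<omega> ^ p k * exp (- V k \<omega>)))"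
    using indep_vars_integrable[OF _ Y_indep Y_integrable]
    by (simp add: prod_I Y_def g_def)
  show "(\<integral>\<omega>. U \<omega> ^ m * exp (- a * U \<omega>) * (\<Prod>k<n. V k \<omega> ^ p k * exp (- V k \<omega>)) \<partial>M)
      = (\<integral>\<omega>. U \<omega> ^ m * exp (- a * U \<omega>) \<partial>M) * (\<Prod>k<n. \<integral>\<omega>. V k \<omega> ^ p k * exp (- V k \<omega>) \<partial>M)"
    using indep_vars_lebesgue_integral[OF _ Y_indep Y_integrable]
    by (simp add: prod_I Y_def g_def)
qed

theorem proposition4:
  fixes M :: "'a measure" and n :: nat
    and \<alpha> :: "nat \<Rightarrow> real"
    and U :: "'a \<Rightarrow> real" and V :: "nat \<Rightarrow> 'a \<Rightarrow> real"
    and fU :: "real \<Rightarrow> ennreal" and fV :: "nat \<Rightarrow> real \<Rightarrow> ennreal"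
    and X :: "nat \<Rightarrow> 'a \<Rightarrow> nat"
    and x :: "nat \<Rightarrow> nat"
  assumes P: "prob_space M"
    and alpha_nonneg: "\<And>i. i < n \<Longrightarrow> \<alpha> i \<ge> 0"
    and U_dist: "distributed M lborel U fU"
    and V_dist: "\<And>i. i < n \<Longrightarrow> distributed M lborel (V i) (fV i)"
    and U_nonneg: "AE \<omega> in M. U \<omega> \<ge> 0"
    and V_nonneg: "\<And>i. i < n \<Longrightarrow> AE \<omega> in M. V i \<omega> \<ge> 0"
    and indep: "prob_space.indep_vars M (\<lambda>_. borel)
                  (\<lambda>i. case i of None \<Rightarrow> U | Some k \<Rightarrow> V k) (insert None (Some ` {..<n}))"
    and X_meas: "\<And>i. i < n \<Longrightarrow> X i \<in> measurable M (count_space UNIV)"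
    and X_cond: "\<And>B0 B y. B0 \<in> sets borel \<Longrightarrow> (\<And>i. i < n \<Longrightarrow> B i \<in> sets borel) \<Longrightarrow>
        measure M {\<omega> \<in> space M. (\<forall>i<n. X i \<omega> = y i) \<and> U \<omega> \<in> B0 \<and> (\<forall>i<n. V i \<omega> \<in> B i)}
        = (\<integral>\<omega>. indicator {\<omega>. U \<omega> \<in> B0 \<and> (\<forall>i<n. V i \<omega> \<in> B i)} \<omega> *
              (\<Prod>i<n. poisson_prob (\<alpha> i * U \<omega> + V i \<omega>) (y i)) \<partial>M)"
  shows "measure M {\<omega> \<in> space M. \<forall>i<n. X i \<omega> = x i}
       = (1 / (\<Prod>i<n. fact (x i))) *
         (\<Sum>j \<in> Pi\<^sub>E {..<n} (\<lambda>i. {0..x i}).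
            (\<Prod>i<n. real (x i choose j i) * \<alpha> i ^ j i) *
            (\<integral>\<omega>. U \<omega> ^ (\<Sum>i<n. j i) * exp (- (\<Sum>i<n. \<alpha> i) * U \<omega>) \<partial>M) *
            (\<Prod>k<n. (\<integral>\<omega>. V k \<omega> ^ (x k - j k) * exp (- V k \<omega>) \<partial>M)))"
proof -
  interpret prob_space M by (rule P)
  define J where "J = Pi\<^sub>E {..<n} (\<lambda>i. {0..x i})"
  define A where "A = (\<Sum>i<n. \<alpha> i)"
  define c where "c j = (\<Prod>i<n. real (x i choose j i) * \<alpha> i ^ j i)" for j
  define F where "F j \<omega> = U \<omega> ^ (\<Sum>i<n. j i) * exp (- A * U \<omega>) *
                           (\<Prod>k<n. V k \<omega> ^ (x k - j k) * exp (- V k \<omega>))" for j \<omega>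
  have A_nonneg: "0 \<le> A"
    unfolding A_def by (rule sum_nonneg) (simp add: alpha_nonneg)
  \<comment> \<open>If all \<open>\<alpha>\<^sub>i\<close> vanish, only the multi-index \<open>j = 0\<close> contributes.\<close>
  have admissible: "0 < A \<or> (\<Sum>i<n. j i) = 0" if "c j \<noteq> 0" for j
  proof (cases "A = 0")
    case True
    then have "\<alpha> i = 0" if "i < n" for i
      using alpha_nonneg that unfolding A_def by (subst (asm) sum_nonneg_eq_0_iff) auto
    with \<open>c j \<noteq> 0\<close> show ?thesis by (auto simp: c_def)
  qed (use A_nonneg in simp)
  have term_integrable: "integrable M (\<lambda>\<omega>. c j * F j \<omega>)" for j
    using integral_power_mult_exp_neg_indep(1)[OF indep U_nonneg V_nonneg A_nonneg admissible]
    by (cases "c j = 0") (simp_all add: F_def)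
  have term_integral: "c j * (\<integral>\<omega>. F j \<omega> \<partial>M)
      = c j * (\<integral>\<omega>. U \<omega> ^ (\<Sum>i<n. j i) * exp (- A * U \<omega>) \<partial>M) *
        (\<Prod>k<n. \<integral>\<omega>. V k \<omega> ^ (x k - j k) * exp (- V k \<omega>) \<partial>M)" for j
    using integral_power_mult_exp_neg_indep(2)[OF indep U_nonneg V_nonneg A_nonneg admissible]
    by (cases "c j = 0") (simp_all add: F_def)
  have "measure M {\<omega> \<in> space M. \<forall>i<n. X i \<omega> = x i}
      = (\<integral>\<omega>. (\<Prod>i<n. poisson_prob (\<alpha> i * U \<omega> + V i \<omega>) (x i)) \<partial>M)"
    using X_cond[of UNIV "\<lambda>_. UNIV" x] by simp
  also have "\<dots> = (\<integral>\<omega>. (1 / (\<Prod>i<n. fact (x i))) * (\<Sum>j\<in>J. c j * F j \<omega>) \<partial>M)"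
    by (simp add: prod_poisson_prob_binomial_expansion J_def c_def F_def A_def mult.assoc)
  also have "\<dots> = (1 / (\<Prod>i<n. fact (x i))) * (\<Sum>j\<in>J. c j * (\<integral>\<omega>. F j \<omega> \<partial>M))"
    using term_integrable by (simp add: Bochner_Integration.integral_sum)
  also have "\<dots> = (1 / (\<Prod>i<n. fact (x i))) *
      (\<Sum>j\<in>J. c j * (\<integral>\<omega>. U \<omega> ^ (\<Sum>i<n. j i) * exp (- A * U \<omega>) \<partial>M) *
        (\<Prod>k<n. \<integral>\<omega>. V k \<omega> ^ (x k - j k) * exp (- V k \<omega>) \<partial>M))"
    by (simp only: term_integral)
  finally show ?thesis
    by (simp add: J_def c_def A_def)
qed

end
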